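(* Let $\phi$ be an instance of \textsc{Max (2,3)-SAT} with $n$ variables and let $T_\phi$ be the tournament instance constructed from $\phi$ as described in the context. Let $\mathsf{opt}_A(\phi)$ be the maximum number of clauses of $\phi$ satisfied by an assignment and $\mathsf{opt}_B(T_\phi)$ the maximum tournament value of $T_\phi$ over all seedings. Then $\mathsf{opt}_B(T_\phi)=\mathsf{opt}_A(\phi)+n$.
   Context: Tournament model: players form a finite set of size $2^{n'}$ totally ordered by strength (stronger beats weaker). A seeding is a bijection $\sigma$ from players to $[2^{n'}]$. In round $r=1,\dots,n'$, for each block of seed positions $\{(k-1)2^r+1,\dots,k2^r\}$, the winner $a$ of its first half $\{(k-1)2^r+1,\dots,(k-1)2^r+2^{r-1}\}$ plays the winner $b$ of its second half (a single-position block is won by the player seeded there), the stronger one wins the block, and the game has value $v(a,b,r)$. The tournament value is the sum of values of all games played. \textsc{Max (2,3)-SAT} instance: a CNF formula $\phi$ with variables $x_1,\dots,x_n$ and clauses $c_1,\dots,c_m$, each clause having exactly two literals and each variable appearing in at most three clauses; the occurrences of each variable $x$ as a literal are numbered $1,2,3$ (its $j$th appearance) in a fixed order. Construction of $T_\phi$: let $n'$ be the smallest integer with $16n\le 2^{n'}$ and $p=2^{n'}-16n$. Players: for each variable $x$, three variable players $x,x^T,x^F$; for each clause $c$, one clause player $c$; and dummy players $f_1,\dots,f_{13n+p-m}$. Strength order (strongest first): $x_1>x_1^T>x_1^F>x_2>x_2^T>x_2^F>\dots>x_n>x_n^T>x_n^F>c_1>\dots>c_m>f_1>\dots>f_{13n+p-m}$.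 Game values: for each variable $x$, $v(x,x^T,1)=v(x^T,x,1)=v(x,x^F,1)=v(x^F,x,1)=1$; for each clause $c$ and each literal of $c$ that is the $j$th appearance of variable $x$, if $x$ appears non-negated there set $v(c,x^T,j)=v(x^T,c,j)=1$, and otherwise set $v(c,x^F,j)=v(x^F,c,j)=1$; all other values $v(a,b,r)$ for $r\in[n']$ are $0$. *)

theory Defs
  imports Main
begin

text \<open>Strength is given by a rank function: smaller rank = stronger player.
  A seat function assigns to each seed position (1-based) a player.\<close>

definition stronger :: "('p \<Rightarrow> nat) \<Rightarrow> 'p \<Rightarrow> 'p \<Rightarrow> 'p" where
  "stronger rk a b = (if rk a \<le> rk b then a else b)"

text \<open>Winner of block k (1-based) of round r, i.e. of seed positions
  (k-1)*2^r+1 .. k*2^r; for r = 0 this is the single position k.\<close>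
fun block_winner :: "('p \<Rightarrow> nat) \<Rightarrow> (nat \<Rightarrow> 'p) \<Rightarrow> nat \<Rightarrow> nat \<Rightarrow> 'p" where
  "block_winner rk seat 0 k = seat k"
| "block_winner rk seat (Suc r) k =
     stronger rk (block_winner rk seat r (2*k - 1)) (block_winner rk seat r (2*k))"

definition tournament_value ::
  "('p \<Rightarrow> nat) \<Rightarrow> ('p \<Rightarrow> 'p \<Rightarrow> nat \<Rightarrow> nat) \<Rightarrow> (nat \<Rightarrow> 'p) \<Rightarrow> nat \<Rightarrow> nat" where
  "tournament_value rk v seat N =
     (\<Sum>r\<in>{1..N}. \<Sum>k\<in>{1..2^(N-r)}.
        v (block_winner rk seat (r-1) (2*k - 1)) (block_winner rk seat (r-1) (2*k)) r)"

definition seeding_value ::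
  "'p set \<Rightarrow> ('p \<Rightarrow> nat) \<Rightarrow> ('p \<Rightarrow> 'p \<Rightarrow> nat \<Rightarrow> nat) \<Rightarrow> nat \<Rightarrow> ('p \<Rightarrow> nat) \<Rightarrow> nat" where
  "seeding_value P rk v N \<sigma> = tournament_value rk v (the_inv_into P \<sigma>) N"

definition opt_B ::
  "'p set \<Rightarrow> ('p \<Rightarrow> nat) \<Rightarrow> ('p \<Rightarrow> 'p \<Rightarrow> nat \<Rightarrow> nat) \<Rightarrow> nat \<Rightarrow> nat" where
  "opt_B P rk v N = Max (seeding_value P rk v N ` {\<sigma>. bij_betw \<sigma> P {1..2^N}})"

text \<open>An instance: n variables x_1..x_n, m clauses c_1..c_m; lit j q (q = 1,2) is the
  q-th literal of clause j, as (variable index, True iff non-negated);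
  occ j q is the occurrence number (1,2,3) of that literal among the appearances of its variable.\<close>

definition occurrences :: "nat \<Rightarrow> (nat \<Rightarrow> nat \<Rightarrow> nat \<times> bool) \<Rightarrow> nat \<Rightarrow> (nat \<times> nat) set" where
  "occurrences m lit x = {(j, q). j \<in> {1..m} \<and> q \<in> {1, 2} \<and> fst (lit j q) = x}"

definition max23sat_instance ::
  "nat \<Rightarrow> nat \<Rightarrow> (nat \<Rightarrow> nat \<Rightarrow> nat \<times> bool) \<Rightarrow> (nat \<Rightarrow> nat \<Rightarrow> nat) \<Rightarrow> bool" where
  "max23sat_instance n m lit occ \<longleftrightarrow>
     (\<forall>j\<in>{1..m}. \<forall>q\<in>{1,2::nat}. fst (lit j q) \<in> {1..n}) \<and>
     (\<forall>j\<in>{1..m}. lit j 1 \<noteq> lit j 2) \<and>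
     (\<forall>x\<in>{1..n}. card {j\<in>{1..m}. \<exists>q\<in>{1,2::nat}. fst (lit j q) = x} \<le> 3) \<and>
     (\<forall>x\<in>{1..n}. card (occurrences m lit x) \<le> 3 \<and>
        bij_betw (\<lambda>(j, q). occ j q) (occurrences m lit x) {1..card (occurrences m lit x)})"

definition clause_sat :: "(nat \<Rightarrow> nat \<Rightarrow> nat \<times> bool) \<Rightarrow> (nat \<Rightarrow> bool) \<Rightarrow> nat \<Rightarrow> bool" where
  "clause_sat lit a j \<longleftrightarrow> (\<exists>q\<in>{1,2::nat}. a (fst (lit j q)) = snd (lit j q))"

definition opt_A :: "nat \<Rightarrow> (nat \<Rightarrow> nat \<Rightarrow> nat \<times> bool) \<Rightarrow> nat" where
  "opt_A m lit = Max ((\<lambda>a. card {j\<in>{1..m}. clause_sat lit a j}) ` (UNIV :: (nat \<Rightarrow> bool) set))"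

datatype player = PVar nat | PT nat | PF nat | PC nat | PD nat

definition T_rounds :: "nat \<Rightarrow> nat" where
  "T_rounds n = (LEAST N. 16 * n \<le> 2 ^ N)"

definition T_pad :: "nat \<Rightarrow> nat" where
  "T_pad n = 2 ^ T_rounds n - 16 * n"

definition T_players :: "nat \<Rightarrow> nat \<Rightarrow> player set" where
  "T_players n m =
     PVar ` {1..n} \<union> PT ` {1..n} \<union> PF ` {1..n} \<union> PC ` {1..m}
     \<union> PD ` {1..13 * n + T_pad n - m}"

text \<open>Strength order x_1 > x_1^T > x_1^F > ... > x_n^F > c_1 > ... > c_m > f_1 > ...;
  rank 0 is the strongest.\<close>
fun T_rank :: "nat \<Rightarrow> nat \<Rightarrow> player \<Rightarrow> nat" where
  "T_rank n m (PVar i) = 3 * (i - 1)"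
| "T_rank n m (PT i) = 3 * (i - 1) + 1"
| "T_rank n m (PF i) = 3 * (i - 1) + 2"
| "T_rank n m (PC j) = 3 * n + (j - 1)"
| "T_rank n m (PD k) = 3 * n + m + (k - 1)"

definition lit_player :: "nat \<times> bool \<Rightarrow> player" where
  "lit_player l = (if snd l then PT (fst l) else PF (fst l))"

definition T_value ::
  "nat \<Rightarrow> nat \<Rightarrow> (nat \<Rightarrow> nat \<Rightarrow> nat \<times> bool) \<Rightarrow> (nat \<Rightarrow> nat \<Rightarrow> nat) \<Rightarrow> player \<Rightarrow> player \<Rightarrow> nat \<Rightarrow> nat" where
  "T_value n m lit occ a b r =
     (if (r = 1 \<and> (\<exists>i\<in>{1..n}. (a, b) \<in> {(PVar i, PT i), (PT i, PVar i), (PVar i, PF i), (PF i, PVar i)}))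
       \<or> (\<exists>j\<in>{1..m}. \<exists>q\<in>{1,2::nat}. r = occ j q \<and>
            ((a, b) = (PC j, lit_player (lit j q)) \<or> (a, b) = (lit_player (lit j q), PC j)))
      then 1 else 0)"

end

theory Submission
  imports Defs
begin

text \<open>
  Upper bound: read an assignment off an arbitrary seeding. A variable player that wins a
  valuable first-round game makes the literal it defeats false; every other variable takes the
  majority sign of its at most three occurrences, so at most one of them is false. Charge each
  valuable game to a variable (its variable game, or a clause game won by a false literal) or to
  a clause (a clause game won by a true literal). In a knockout tournament a player meets at most
  one opponent per round and plays no game after a defeat; as a literal player is weaker than its
  variable and stronger than every clause, the charging is injective. Hence the value is at most
  n plus the number of satisfied clauses.

  Lower bound: for an optimal assignment, give every variable a gadget of 16 consecutive seeds in
  which the variable meets its false literal in round 1, while its true literal meets, in round r,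
  the satisfied clause whose chosen literal is the r-th occurrence of the variable.
\<close>

section \<open>Knockout tournaments\<close>

definition block :: "nat \<Rightarrow> nat \<Rightarrow> nat set" where
  "block r k = {(k - 1) * 2 ^ r + 1 .. k * 2 ^ r}"

definition games :: "nat \<Rightarrow> (nat \<times> nat) set" where
  "games N = Sigma {1..N} (\<lambda>r. {1..2 ^ (N - r)})"

definition game_players :: "('p \<Rightarrow> nat) \<Rightarrow> (nat \<Rightarrow> 'p) \<Rightarrow> nat \<times> nat \<Rightarrow> 'p set" where
  "game_players rk seat g =
     {block_winner rk seat (fst g - 1) (2 * snd g - 1), block_winner rk seat (fst g - 1) (2 * snd g)}"

lemma block_Suc:
  assumes "1 \<le> k"
  shows "block (Suc r) k = block r (2 * k - 1) \<union> block r (2 * k)"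
proof -
  obtain c where "k = Suc c" using assms by (cases k) auto
  then show ?thesis unfolding block_def by (auto simp: algebra_simps)
qed

lemma mem_block_iff: "s \<in> block r k \<and> 1 \<le> k \<longleftrightarrow> 1 \<le> s \<and> k = (s - 1) div 2 ^ r + 1"
proof -
  have "s \<in> block r (Suc c) \<longleftrightarrow> 1 \<le> s \<and> (s - 1) div 2 ^ r = c" for c
  proof -
    have "(s - 1) div 2 ^ r < Suc c \<longleftrightarrow> s - 1 < Suc c * 2 ^ r"
      by (rule div_less_iff_less_mult) simp
    moreover have "c \<le> (s - 1) div 2 ^ r \<longleftrightarrow> c * 2 ^ r \<le> s - 1"
      by (rule less_eq_div_iff_mult_less_eq) simp
    moreover have "s \<in> block r (Suc c) \<longleftrightarrow> 1 \<le> s \<and> c * 2 ^ r \<le> s - 1 \<and> s - 1 < Suc c * 2 ^ r"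
      unfolding block_def by (simp only: atLeastAtMost_iff diff_Suc_1) linarith
    ultimately show ?thesis by linarith
  qed
  then show ?thesis by (cases k) auto
qed

lemma block_halves:
  assumes "1 \<le> r" "1 \<le> k"
  shows "block (r - 1) (2 * k - 1) = {(k - 1) * 2 ^ r + 1 .. (k - 1) * 2 ^ r + 2 ^ (r - 1)}"
    and "block (r - 1) (2 * k) = {(k - 1) * 2 ^ r + 2 ^ (r - 1) + 1 .. k * 2 ^ r}"
proof -
  obtain r' c where "r = Suc r'" "k = Suc c" using assms by (cases r; cases k) auto
  then show "block (r - 1) (2 * k - 1) = {(k - 1) * 2 ^ r + 1 .. (k - 1) * 2 ^ r + 2 ^ (r - 1)}"
    and "block (r - 1) (2 * k) = {(k - 1) * 2 ^ r + 2 ^ (r - 1) + 1 .. k * 2 ^ r}"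
    unfolding block_def by (simp_all add: algebra_simps)
qed

lemma block_mono:
  assumes "s \<in> block r k" "s \<in> block r' k'" "1 \<le> k" "1 \<le> k'" "r \<le> r'"
  shows "block r k \<subseteq> block r' k'"
proof
  fix t assume "t \<in> block r k"
  then have t: "1 \<le> t" "(t - 1) div 2 ^ r = (s - 1) div 2 ^ r"
    using assms(1,3) mem_block_iff[of t r k] mem_block_iff[of s r k] by auto
  have "(2::nat) ^ r' = 2 ^ r * 2 ^ (r' - r)"
    using assms(5) by (simp flip: power_add)
  then have "x div 2 ^ r' = x div 2 ^ r div 2 ^ (r' - r)" for x :: nat
    by (simp only: div_mult2_eq)
  then have "(t - 1) div 2 ^ r' = (s - 1) div 2 ^ r'"
    using t(2) by metis
  then show "t \<in> block r' k'"
    using assms(2,4) t(1) mem_block_iff[of t r' k'] mem_block_iff[of s r' k'] by auto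
qed

lemma block_winner_in_block:
  assumes "1 \<le> k"
  shows "block_winner rk seat r k \<in> seat ` block r k"
  using assms
proof (induction r arbitrary: k)
  case 0
  then show ?case unfolding block_def by simp
next
  case (Suc r)
  have "block_winner rk seat r (2 * k - 1) \<in> seat ` block r (2 * k - 1)"
    and "block_winner rk seat r (2 * k) \<in> seat ` block r (2 * k)"
    using Suc by simp_all
  then show ?case
    unfolding block_Suc[OF Suc.prems] by (auto simp: stronger_def)
qed

lemma block_winner_le:
  assumes "1 \<le> k" "s \<in> block r k"
  shows "rk (block_winner rk seat r k) \<le> rk (seat s)"
  using assms
proof (induction r arbitrary: k)
  case 0
  then show ?case unfolding block_def by simp
next
  case (Suc r)
  obtain k' where k': "k' \<in> {2 * k - 1, 2 * k}" "s \<in> block r k'"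
    using Suc.prems block_Suc by blast
  then have "rk (block_winner rk seat (Suc r) k) \<le> rk (block_winner rk seat r k')"
    by (auto simp: stronger_def)
  also have "\<dots> \<le> rk (seat s)"
    using k' Suc.prems(1) by (intro Suc.IH) auto
  finally show ?case .
qed

lemma block_winner_eqI:
  assumes "1 \<le> k" "s \<in> block r k" "\<And>t. t \<in> block r k \<Longrightarrow> t \<noteq> s \<Longrightarrow> rk (seat s) < rk (seat t)"
  shows "block_winner rk seat r k = seat s"
proof -
  obtain t where t: "t \<in> block r k" "block_winner rk seat r k = seat t"
    using block_winner_in_block[OF assms(1), of rk seat r] by (rule imageE) simp
  moreover have "rk (seat t) \<le> rk (seat s)"
    using block_winner_le[OF assms(1,2), of rk seat] t(2) by simp
  ultimately show ?thesis using assms(3) by fastforce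
qed

lemma mem_games_iff: "g \<in> games N \<longleftrightarrow> 1 \<le> fst g \<and> fst g \<le> N \<and> 1 \<le> snd g \<and> snd g \<le> 2 ^ (N - fst g)"
  by (cases g) (simp add: games_def)

lemma tournament_value_of_bool:
  assumes "\<And>x y r. v x y r = of_bool (P {x, y} r)"
  shows "tournament_value rk v seat N = card {g \<in> games N. P (game_players rk seat g) (fst g)}"
proof -
  have "tournament_value rk v seat N =
      (\<Sum>g\<in>games N. of_bool (P (game_players rk seat g) (fst g)))"
    unfolding tournament_value_def games_def game_players_def assms
    by (subst sum.Sigma) (auto simp: case_prod_beta)
  also have "\<dots> = card {g \<in> games N. P (game_players rk seat g) (fst g)}"
    by (simp add: games_def Collect_conj_eq Int_commute)
  finally show ?thesis .
qed

lemma mem_gamesI: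
  assumes "1 \<le> r" "1 \<le> k" "k * 2 ^ r \<le> 2 ^ N"
  shows "(r, k) \<in> games N"
proof -
  have "2 ^ r \<le> k * 2 ^ r" using assms(2) by simp
  then have "(2::nat) ^ r \<le> 2 ^ N" using assms(3) by (rule le_trans)
  then have "r \<le> N" by simp
  then have "k * 2 ^ r \<le> 2 ^ (N - r) * 2 ^ r" using assms(3) by (simp flip: power_add)
  then show ?thesis unfolding games_def using assms(1,2) \<open>r \<le> N\<close> by simp
qed

lemma block_subset_positions:
  assumes "(r, k) \<in> games N"
  shows "block r k \<subseteq> {1..2 ^ N}"
proof -
  have "k * 2 ^ r \<le> 2 ^ (N - r) * 2 ^ r" using assms by (simp add: games_def)
  also have "\<dots> = 2 ^ N" using assms by (simp add: games_def flip: power_add)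
  finally show ?thesis unfolding block_def by auto
qed

lemma game_player_wins_half:
  assumes "p \<in> game_players rk seat (r, k)"
  obtains k' where "k' \<in> {2 * k - 1, 2 * k}" "p = block_winner rk seat (r - 1) k'"
  using assms unfolding game_players_def by auto

lemma game_players_subset_block:
  assumes "1 \<le> r" "1 \<le> k"
  shows "game_players rk seat (r, k) \<subseteq> seat ` block r k"
proof
  fix p assume "p \<in> game_players rk seat (r, k)"
  then obtain k' where k': "k' \<in> {2 * k - 1, 2 * k}" "p = block_winner rk seat (r - 1) k'"
    by (rule game_player_wins_half)
  have "1 \<le> k'" using k'(1) assms(2) by auto
  then have "p \<in> seat ` block (r - 1) k'"
    unfolding k'(2) by (rule block_winner_in_block)
  moreover have "block (r - 1) k' \<subseteq> block r k"
    using block_Suc[OF assms(2), of "r - 1"] assms(1) k'(1) by auto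
  ultimately show "p \<in> seat ` block r k" by blast
qed

lemma game_players_same_round:
  assumes inj: "inj_on seat {1..2 ^ N}" and g: "g \<in> games N" "g' \<in> games N"
    and "fst g = fst g'" "p \<in> game_players rk seat g" "p \<in> game_players rk seat g'"
  shows "g = g'"
proof -
  obtain r k k' where rk: "g = (r, k)" "g' = (r, k')"
    using \<open>fst g = fst g'\<close> by (cases g, cases g') simp
  then have "1 \<le> r" "1 \<le> k" "1 \<le> k'" using g by (simp_all add: games_def)
  obtain s where s: "s \<in> block r k" "p = seat s"
    using subsetD[OF game_players_subset_block[OF \<open>1 \<le> r\<close> \<open>1 \<le> k\<close>] assms(5)[unfolded rk(1)]]
    by (rule imageE)
  obtain s' where s': "s' \<in> block r k'" "p = seat s'"
    using subsetD[OF game_players_subset_block[OF \<open>1 \<le> r\<close> \<open>1 \<le> k'\<close>] assms(6)[unfolded rk(2)]]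
    by (rule imageE)
  have "s \<in> {1..2 ^ N}" "s' \<in> {1..2 ^ N}"
    using block_subset_positions[OF g(1)[unfolded rk(1)]] block_subset_positions[OF g(2)[unfolded rk(2)]]
      s(1) s'(1) by blast+
  then have "s = s'" using inj s(2) s'(2) by (auto dest: inj_onD)
  then have "k = k'"
    using mem_block_iff[of s r k] mem_block_iff[of s' r k'] s(1) s'(1) \<open>1 \<le> k\<close> \<open>1 \<le> k'\<close> by simp
  then show ?thesis using rk by simp
qed

lemma game_players_after_defeat:
  assumes inj: "inj_on seat {1..2 ^ N}" and g: "g \<in> games N" "g' \<in> games N"
    and defeat: "p \<in> game_players rk seat g" "q \<in> game_players rk seat g" "rk q < rk p"
    and "p \<in> game_players rk seat g'"
  shows "fst g' \<le> fst g"
proof (rule ccontr)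
  assume later: "\<not> fst g' \<le> fst g"
  obtain r k r' k' where rk: "g = (r, k)" "g' = (r', k')" by (cases g, cases g')
  then have "1 \<le> r" "1 \<le> k" "1 \<le> k'" "r < r'" using g later by (simp_all add: games_def)
  obtain k'' where k'': "k'' \<in> {2 * k' - 1, 2 * k'}" "p = block_winner rk seat (r' - 1) k''"
    using assms(7)[unfolded rk(2)] by (rule game_player_wins_half)
  have "1 \<le> k''" using k''(1) \<open>1 \<le> k'\<close> by auto
  have sub: "block (r' - 1) k'' \<subseteq> block r' k'"
    using block_Suc[OF \<open>1 \<le> k'\<close>, of "r' - 1"] \<open>r < r'\<close> k''(1) by auto
  obtain s'' where s'': "s'' \<in> block (r' - 1) k''" "p = seat s''"
    using block_winner_in_block[OF \<open>1 \<le> k''\<close>] unfolding k''(2) by (rule imageE)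
  have in_block: "x \<in> seat ` block r k" if "x \<in> game_players rk seat g" for x
    using game_players_subset_block[OF \<open>1 \<le> r\<close> \<open>1 \<le> k\<close>, of rk seat] that
    unfolding rk(1) by blast
  obtain s where s: "s \<in> block r k" "p = seat s"
    using in_block[OF defeat(1)] by (rule imageE)
  obtain t where t: "t \<in> block r k" "q = seat t"
    using in_block[OF defeat(2)] by (rule imageE)
  have "s \<in> {1..2 ^ N}" "s'' \<in> {1..2 ^ N}"
    using block_subset_positions[OF g(1)[unfolded rk(1)]] block_subset_positions[OF g(2)[unfolded rk(2)]]
      s(1) s''(1) sub by blast+
  then have "s = s''" using inj s(2) s''(2) by (auto dest: inj_onD)
  then have "block r k \<subseteq> block (r' - 1) k''"
    using block_mono[OF s(1) _ \<open>1 \<le> k\<close> \<open>1 \<le> k''\<close>] s''(1) \<open>r < r'\<close> by simp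
  then have "rk p \<le> rk q"
    using block_winner_le[OF \<open>1 \<le> k''\<close>, of t] k''(2) t by auto
  then show False using defeat(3) by simp
qed

lemma defeated_game_unique:
  assumes inj: "inj_on seat {1..2 ^ N}" and g: "g \<in> games N" "g' \<in> games N"
    and "p \<in> game_players rk seat g" "q \<in> game_players rk seat g" "rk q < rk p"
    and "p \<in> game_players rk seat g'" "q' \<in> game_players rk seat g'" "rk q' < rk p"
  shows "g = g'"
proof -
  have "fst g' \<le> fst g" "fst g \<le> fst g'"
    using game_players_after_defeat[OF inj] assms by blast+
  then show ?thesis using game_players_same_round[OF inj g] assms(4,7) by simp
qed

section \<open>The tournament of a Max (2,3)-SAT instance\<close>

lemma lit_player_eq_iff [simp]: "lit_player l = lit_player l' \<longleftrightarrow> l = l'"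
  by (cases l; cases l') (auto simp: lit_player_def)

lemma lit_player_neq [simp]:
  "lit_player l \<noteq> PVar x" "lit_player l \<noteq> PC j" "lit_player l \<noteq> PD d"
  by (auto simp: lit_player_def)

lemma T_rank_var_less_lit: "T_rank n m (PVar x) < T_rank n m (lit_player (x, b))"
  by (simp add: lit_player_def)

lemma T_rank_lit_less_clause:
  "x \<in> {1..n} \<Longrightarrow> T_rank n m (lit_player (x, b)) < T_rank n m (PC j)"
  by (auto simp: lit_player_def)

definition valuable_match ::
  "nat \<Rightarrow> nat \<Rightarrow> (nat \<Rightarrow> nat \<Rightarrow> nat \<times> bool) \<Rightarrow> (nat \<Rightarrow> nat \<Rightarrow> nat) \<Rightarrow> player set \<Rightarrow> nat \<Rightarrow> bool" where
  "valuable_match n m lit occ M r \<longleftrightarrow>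
     (r = 1 \<and> (\<exists>x\<in>{1..n}. \<exists>b. M = {PVar x, lit_player (x, b)})) \<or>
     (\<exists>j\<in>{1..m}. \<exists>q\<in>{1, 2}. r = occ j q \<and> M = {PC j, lit_player (lit j q)})"

lemma T_value_eq: "T_value n m lit occ x y r = of_bool (valuable_match n m lit occ {x, y} r)"
proof -
  have "(x, y) \<in> {(PVar i, PT i), (PT i, PVar i), (PVar i, PF i), (PF i, PVar i)} \<longleftrightarrow>
      (\<exists>b. {x, y} = {PVar i, lit_player (i, b)})" for i
    by (auto simp: doubleton_eq_iff lit_player_def)
  moreover have "((x, y) = (PC j, L) \<or> (x, y) = (L, PC j)) \<longleftrightarrow> {x, y} = {PC j, L}" for j L
    by (auto simp: doubleton_eq_iff)
  ultimately show ?thesis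
    unfolding T_value_def valuable_match_def by (simp add: eq_commute[of _ "occ _ _"])
qed

lemma instance_lit_var:
  "max23sat_instance n m lit occ \<Longrightarrow> j \<in> {1..m} \<Longrightarrow> q \<in> {1, 2} \<Longrightarrow> fst (lit j q) \<in> {1..n}"
  unfolding max23sat_instance_def by blast

lemma finite_occurrences: "finite (occurrences m lit x)"
  by (rule finite_subset[of _ "{1..m} \<times> {1, 2}"]) (auto simp: occurrences_def)

lemma finite_satisfied_counts: "finite ((\<lambda>a. card {j \<in> {1..m}. clause_sat lit a j}) ` UNIV)"
proof (rule finite_subset)
  have "card {j \<in> {1..m}. clause_sat lit a j} \<le> card {1..m}" for a
    by (rule card_mono) auto
  then show "(\<lambda>a. card {j \<in> {1..m}. clause_sat lit a j}) ` UNIV \<subseteq> {..m}" by auto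
qed simp

lemma card_satisfied_le_opt_A: "card {j \<in> {1..m}. clause_sat lit a j} \<le> opt_A m lit"
  unfolding opt_A_def using finite_satisfied_counts by (rule Max_ge) simp

lemma opt_A_attained: "\<exists>a. opt_A m lit = card {j \<in> {1..m}. clause_sat lit a j}"
  unfolding opt_A_def using Max_in[OF finite_satisfied_counts] by blast

lemma instance_clauses_le: "max23sat_instance n m lit occ \<Longrightarrow> m \<le> 3 * n"
proof -
  assume inst: "max23sat_instance n m lit occ"
  define S where "S x = {j \<in> {1..m}. \<exists>q\<in>{1, 2::nat}. fst (lit j q) = x}" for x
  have "{1..m} \<subseteq> (\<Union>x\<in>{1..n}. S x)"
    using instance_lit_var[OF inst] unfolding S_def by fastforce
  then have "m \<le> card (\<Union>x\<in>{1..n}. S x)"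
    using card_mono[of "\<Union>x\<in>{1..n}. S x" "{1..m}"] by (simp add: S_def)
  also have "\<dots> \<le> (\<Sum>x\<in>{1..n}. card (S x))" by (rule card_UN_le) simp
  also have "\<dots> \<le> (\<Sum>x\<in>{1..n}. 3)"
    using inst unfolding max23sat_instance_def S_def by (intro sum_mono) blast
  finally show ?thesis by simp
qed

lemma T_rounds_fit: "16 * n \<le> 2 ^ T_rounds n"
  unfolding T_rounds_def by (rule LeastI[of _ "16 * n"]) (simp add: less_imp_le)

lemma card_T_players:
  assumes "m \<le> 3 * n"
  shows "card (T_players n m) = 2 ^ T_rounds n"
proof -
  have "card (T_players n m) = n + n + n + m + (13 * n + T_pad n - m)"
    unfolding T_players_def
    by (subst card_Un_disjoint; auto simp: card_image inj_on_def)+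
  then show ?thesis using assms T_rounds_fit[of n] unfolding T_pad_def by simp
qed

section \<open>Upper bound\<close>

lemma majority_value:
  assumes "finite S"
  obtains b :: bool where "2 * card {s \<in> S. f s \<noteq> b} \<le> card S"
proof -
  have "card {s \<in> S. f s \<noteq> True} + card {s \<in> S. f s \<noteq> False} = card S"
    using assms by (subst card_Un_disjoint[symmetric]) (auto intro: arg_cong[where f = card])
  then show ?thesis
    using that[of True] that[of False] by linarith
qed

lemma card_le_card_if_charging:
  assumes "finite B" and "\<And>a. a \<in> A \<Longrightarrow> \<exists>b\<in>B. R a b"
    and "\<And>a a' b. a \<in> A \<Longrightarrow> a' \<in> A \<Longrightarrow> R a b \<Longrightarrow> R a' b \<Longrightarrow> a = a'"
  shows "card A \<le> card B"
proof -
  obtain f where f: "\<And>a. a \<in> A \<Longrightarrow> f a \<in> B \<and> R a (f a)"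
    using assms(2) by metis
  have "inj_on f A" using f assms(3) by (metis inj_onI)
  then show ?thesis using f assms(1) by (intro card_inj_on_le) auto
qed

locale instance_seating =
  fixes n m :: nat and lit :: "nat \<Rightarrow> nat \<Rightarrow> nat \<times> bool" and occ :: "nat \<Rightarrow> nat \<Rightarrow> nat"
    and N :: nat and seat :: "nat \<Rightarrow> player"
  assumes sat_instance: "max23sat_instance n m lit occ" and inj_seat: "inj_on seat {1..2 ^ N}"
begin

abbreviation players :: "nat \<times> nat \<Rightarrow> player set" where
  "players \<equiv> game_players (T_rank n m) seat"

definition has_variable_game :: "nat \<Rightarrow> bool" where
  "has_variable_game x \<longleftrightarrow> (\<exists>g\<in>games N. \<exists>b. fst g = 1 \<and> players g = {PVar x, lit_player (x, b)})"

lemma variable_game_lit_unique: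
  assumes "g \<in> games N" "fst g = 1" "players g = {PVar x, lit_player (x, b)}"
    and "g' \<in> games N" "fst g' = 1" "players g' = {PVar x, lit_player (x, b')}"
  shows "b = b'"
proof -
  have "g = g'"
    using game_players_same_round[OF inj_seat assms(1,4), where rk = "T_rank n m" and p = "PVar x"] assms(2,3,5,6) by simp
  then show ?thesis using assms(3,6) by (auto simp: doubleton_eq_iff)
qed

definition consistent_assignment :: "(nat \<Rightarrow> bool) \<Rightarrow> bool" where
  "consistent_assignment a \<longleftrightarrow>
     (\<forall>g x b. g \<in> games N \<longrightarrow> fst g = 1 \<longrightarrow> players g = {PVar x, lit_player (x, b)} \<longrightarrow> a x \<noteq> b) \<and>
     (\<forall>x\<in>{1..n}. \<not> has_variable_game x \<longrightarrow>
        card {(j, q) \<in> occurrences m lit x. snd (lit j q) \<noteq> a x} \<le> 1)"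

lemma consistent_assignment_round_one:
  "consistent_assignment a \<Longrightarrow> g \<in> games N \<Longrightarrow> fst g = 1 \<Longrightarrow>
    players g = {PVar x, lit_player (x, b)} \<Longrightarrow> a x \<noteq> b"
  unfolding consistent_assignment_def by blast

lemma consistent_assignment_few_false:
  "consistent_assignment a \<Longrightarrow> x \<in> {1..n} \<Longrightarrow> \<not> has_variable_game x \<Longrightarrow>
    card {(j, q) \<in> occurrences m lit x. snd (lit j q) \<noteq> a x} \<le> 1"
  unfolding consistent_assignment_def by blast

lemma consistent_assignment_exists: "\<exists>a. consistent_assignment a"
proof
  define maj where "maj x = (SOME b. 2 * card {(j, q) \<in> occurrences m lit x. snd (lit j q) \<noteq> b}
      \<le> card (occurrences m lit x))" for x
  define a where "a x = (if has_variable_game x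
      then \<exists>g\<in>games N. fst g = 1 \<and> players g = {PVar x, lit_player (x, False)} else maj x)" for x
  have "a x \<noteq> b" if "g \<in> games N" "fst g = 1" "players g = {PVar x, lit_player (x, b)}" for g x b
    using that variable_game_lit_unique[OF that] unfolding a_def has_variable_game_def by (cases b) auto
  moreover have "card {(j, q) \<in> occurrences m lit x. snd (lit j q) \<noteq> a x} \<le> 1"
    if "x \<in> {1..n}" "\<not> has_variable_game x" for x
  proof -
    have "2 * card {(j, q) \<in> occurrences m lit x. snd (lit j q) \<noteq> maj x} \<le> card (occurrences m lit x)"
      unfolding maj_def
      using majority_value[OF finite_occurrences[of m lit x], where f = "\<lambda>(j, q). snd (lit j q)"]
      by (rule someI_ex) (simp add: case_prod_beta, blast)
    moreover have "card (occurrences m lit x) \<le> 3"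
      using sat_instance that(1) unfolding max23sat_instance_def by blast
    ultimately show ?thesis using that(2) unfolding a_def by simp
  qed
  ultimately show "consistent_assignment a"
    unfolding consistent_assignment_def by blast
qed

definition charges :: "(nat \<Rightarrow> bool) \<Rightarrow> nat \<times> nat \<Rightarrow> nat + nat \<Rightarrow> bool" where
  "charges a g t \<longleftrightarrow>
     (\<exists>x\<in>{1..n}. \<exists>b. t = Inl x \<and> fst g = 1 \<and> players g = {PVar x, lit_player (x, b)}) \<or>
     (\<exists>j\<in>{1..m}. \<exists>q\<in>{1, 2}. fst g = occ j q \<and> players g = {PC j, lit_player (lit j q)} \<and>
        t = (if a (fst (lit j q)) = snd (lit j q) then Inr j else Inl (fst (lit j q))))"

lemma valuable_game_charged:
  assumes "valuable_match n m lit occ (players g) (fst g)"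
  shows "\<exists>t \<in> {1..n} <+> {j \<in> {1..m}. clause_sat lit a j}. charges a g t"
  using assms unfolding valuable_match_def
proof (elim disjE conjE bexE exE)
  fix x b assume "fst g = 1" "x \<in> {1..n}" "players g = {PVar x, lit_player (x, b)}"
  then show ?thesis unfolding charges_def by blast
next
  fix j q assume jq: "j \<in> {1..m}" "q \<in> {1, 2}" "fst g = occ j q"
    "players g = {PC j, lit_player (lit j q)}"
  define t where "t = (if a (fst (lit j q)) = snd (lit j q) then Inr j else Inl (fst (lit j q)))"
  have "charges a g t" unfolding charges_def t_def using jq by blast
  moreover have "t \<in> {1..n} <+> {j \<in> {1..m}. clause_sat lit a j}"
    using jq instance_lit_var[OF sat_instance jq(1,2)] unfolding t_def clause_sat_def by auto
  ultimately show ?thesis by blast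
qed

lemma variable_charge_unique:
  assumes a: "consistent_assignment a"
    and g: "g \<in> games N" "fst g = 1" "players g = {PVar x, lit_player (x, b)}"
    and g': "g' \<in> games N" "charges a g' (Inl x)"
  shows "g = g'"
proof -
  have "a x \<noteq> b" using consistent_assignment_round_one[OF a g] .
  from g'(2) consider (variable) b' where "fst g' = 1" "players g' = {PVar x, lit_player (x, b')}"
    | (clause) j q where "players g' = {PC j, lit_player (lit j q)}"
      "Inl x = (if a (fst (lit j q)) = snd (lit j q) then Inr j else Inl (fst (lit j q)))"
    unfolding charges_def by blast
  then show ?thesis
  proof cases
    case variable
    then show ?thesis
      using game_players_same_round[OF inj_seat g(1) g'(1), where rk = "T_rank n m" and p = "PVar x"]
        g(2,3) by simp
  next
    case clause
    have "lit j q = (x, b)"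
      using clause(2) \<open>a x \<noteq> b\<close> by (cases "lit j q") (auto split: if_splits)
    then have "lit_player (x, b) \<in> players g'" using clause(1) by simp
    then have "fst g' \<le> fst g"
      using game_players_after_defeat[OF inj_seat g(1) g'(1),
          where rk = "T_rank n m" and p = "lit_player (x, b)" and q = "PVar x"]
        T_rank_var_less_lit g(3) by simp
    then show ?thesis
      using game_players_same_round[OF inj_seat g(1) g'(1),
          where rk = "T_rank n m" and p = "lit_player (x, b)"]
        \<open>lit_player (x, b) \<in> players g'\<close> g(2,3) g'(1) by (simp add: mem_games_iff)
  qed
qed

lemma false_clause_games_unique:
  assumes a: "consistent_assignment a" and x: "x \<in> {1..n}" "\<not> has_variable_game x"
    and g: "g \<in> games N" "(j, q) \<in> occurrences m lit x" "fst g = occ j q" "PC j \<in> players g"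
      "a x \<noteq> snd (lit j q)"
    and g': "g' \<in> games N" "(j', q') \<in> occurrences m lit x" "fst g' = occ j' q'" "PC j' \<in> players g'"
      "a x \<noteq> snd (lit j' q')"
  shows "g = g'"
proof -
  define F where "F = {(j, q) \<in> occurrences m lit x. snd (lit j q) \<noteq> a x}"
  have "finite F" unfolding F_def by (rule finite_subset[OF _ finite_occurrences]) auto
  moreover have "card F \<le> Suc 0" using consistent_assignment_few_false[OF a x] unfolding F_def by simp
  ultimately have "u = v" if "u \<in> F" "v \<in> F" for u v
    using card_le_Suc0_iff_eq that by blast
  moreover have "(j, q) \<in> F" "(j', q') \<in> F" using g(2,5) g'(2,5) unfolding F_def by simp_all
  ultimately have "(j, q) = (j', q')" by blast
  then show ?thesis
    using game_players_same_round[OF inj_seat g(1) g'(1), where rk = "T_rank n m" and p = "PC j"]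
      g(3,4) g'(3,4) by simp
qed

lemma clause_game_unique:
  assumes "g \<in> games N" "g' \<in> games N" "j \<in> {1..m}" "q \<in> {1, 2}" "q' \<in> {1, 2}"
    and "players g = {PC j, lit_player (lit j q)}" "players g' = {PC j, lit_player (lit j q')}"
  shows "g = g'"
proof -
  have lit_less: "T_rank n m (lit_player (lit j p)) < T_rank n m (PC j)" if "p \<in> {1, 2}" for p
    using T_rank_lit_less_clause[OF instance_lit_var[OF sat_instance assms(3) that]]
    by (metis prod.collapse)
  show ?thesis
    using defeated_game_unique[OF inj_seat assms(1,2) _ _ lit_less[OF assms(4)] _ _ lit_less[OF assms(5)]]
      assms(6,7) by simp
qed

lemma charges_unique:
  assumes a: "consistent_assignment a" and g: "g \<in> games N" "g' \<in> games N"
    and c: "charges a g t" "charges a g' t"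
  shows "g = g'"
proof (cases "\<exists>g0\<in>games N. \<exists>x b. t = Inl x \<and> fst g0 = 1 \<and> players g0 = {PVar x, lit_player (x, b)}")
  case True
  then obtain g0 x b where "g0 \<in> games N" "t = Inl x" "fst g0 = 1" "players g0 = {PVar x, lit_player (x, b)}"
    by blast
  then show ?thesis
    using variable_charge_unique[OF a, of g0 x b] g c by metis
next
  case False
  then obtain j q j' q' where jq: "j \<in> {1..m}" "q \<in> {1, 2}" "fst g = occ j q"
      "players g = {PC j, lit_player (lit j q)}"
      "t = (if a (fst (lit j q)) = snd (lit j q) then Inr j else Inl (fst (lit j q)))"
    and jq': "j' \<in> {1..m}" "q' \<in> {1, 2}" "fst g' = occ j' q'"
      "players g' = {PC j', lit_player (lit j' q')}"
      "t = (if a (fst (lit j' q')) = snd (lit j' q') then Inr j' else Inl (fst (lit j' q')))"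
    using c g unfolding charges_def by blast
  show ?thesis
  proof (cases "a (fst (lit j q)) = snd (lit j q)")
    case True
    then have "j' = j"
      using jq(5) jq'(5) by (auto split: if_splits)
    then show ?thesis using clause_game_unique[OF g jq(1,2) jq'(2) jq(4)] jq'(4) by simp
  next
    case False
    define x where "x = fst (lit j q)"
    have "t = Inl x" using False jq(5) unfolding x_def by simp
    then have "fst (lit j' q') = x" "a x \<noteq> snd (lit j' q')" "a x \<noteq> snd (lit j q)"
      using False jq'(5) unfolding x_def by (auto split: if_splits)
    moreover have "\<not> has_variable_game x"
      using \<open>\<not> (\<exists>g0\<in>games N. _)\<close> \<open>t = Inl x\<close> unfolding has_variable_game_def by blast
    moreover have "x \<in> {1..n}" using instance_lit_var[OF sat_instance jq(1,2)] unfolding x_def .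
    ultimately show ?thesis
      using false_clause_games_unique[OF a _ _ g(1) _ jq(3) _ _ g(2) _ jq'(3)] jq(1,2,4) jq'(1,2,4)
      unfolding occurrences_def x_def by simp
  qed
qed

lemma upper_bound: "tournament_value (T_rank n m) (T_value n m lit occ) seat N \<le> opt_A m lit + n"
proof -
  obtain a where a: "consistent_assignment a" using consistent_assignment_exists by blast
  define sat where "sat = {j \<in> {1..m}. clause_sat lit a j}"
  have "tournament_value (T_rank n m) (T_value n m lit occ) seat N =
      card {g \<in> games N. valuable_match n m lit occ (players g) (fst g)}"
    by (rule tournament_value_of_bool) (rule T_value_eq)
  also have "\<dots> \<le> card ({1..n} <+> sat)"
  proof (rule card_le_card_if_charging[where R = "charges a"])
    show "finite ({1..n} <+> sat)" by (simp add: sat_def)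
    show "\<exists>t\<in>{1..n} <+> sat. charges a g t"
      if "g \<in> {g \<in> games N. valuable_match n m lit occ (players g) (fst g)}" for g
      using valuable_game_charged that unfolding sat_def by blast
    show "g = g'" if "g \<in> {g \<in> games N. valuable_match n m lit occ (players g) (fst g)}"
      "g' \<in> {g \<in> games N. valuable_match n m lit occ (players g) (fst g)}"
      "charges a g t" "charges a g' t" for g g' t
      using charges_unique[OF a] that by blast
  qed
  also have "\<dots> = n + card sat" by (simp add: sat_def card_Plus)
  also have "card sat \<le> opt_A m lit" unfolding sat_def by (rule card_satisfied_le_opt_A)
  finally show ?thesis by simp
qed

end

section \<open>Lower bound\<close>

lemma bij_betw_extend:
  assumes "inj_on f A" "A \<subseteq> X" "f ` A \<subseteq> Y" "finite X" "finite Y" "card X = card Y"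
  obtains h where "bij_betw h X Y" "\<And>x. x \<in> A \<Longrightarrow> h x = f x"
proof -
  have "card (X - A) = card (Y - f ` A)"
    using assms by (simp add: card_Diff_subset card_image finite_subset)
  then obtain h0 where h0: "bij_betw h0 (X - A) (Y - f ` A)"
    using assms(4,5) finite_same_card_bij by blast
  define h where "h x = (if x \<in> A then f x else h0 x)" for x
  have "bij_betw h (A \<union> (X - A)) (f ` A \<union> (Y - f ` A))"
    unfolding h_def using assms(1) h0
    by (intro bij_betw_disjoint_Un) (auto simp: bij_betw_def inj_on_def)
  moreover have "A \<union> (X - A) = X" "f ` A \<union> (Y - f ` A) = Y" using assms(2,3) by auto
  ultimately show ?thesis using that h_def by simp
qed

lemma mult_16_add_eq_iff:
  assumes "t \<in> {1..16}" "t' \<in> {1..16}"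
  shows "16 * c + t = 16 * c' + t' \<longleftrightarrow> c = c' \<and> (t::nat) = t'"
  using assms by (cases c c' rule: linorder_cases) auto

locale assignment_gadgets =
  fixes n m :: nat and lit :: "nat \<Rightarrow> nat \<Rightarrow> nat \<times> bool" and occ :: "nat \<Rightarrow> nat \<Rightarrow> nat"
    and a :: "nat \<Rightarrow> bool"
  assumes sat_instance: "max23sat_instance n m lit occ"
begin

definition satisfied :: "nat set" where
  "satisfied = {j \<in> {1..m}. clause_sat lit a j}"

definition true_lit :: "nat \<Rightarrow> nat" where
  "true_lit j = (SOME q. q \<in> {1, 2} \<and> a (fst (lit j q)) = snd (lit j q))"

definition clause_var :: "nat \<Rightarrow> nat" where
  "clause_var j = fst (lit j (true_lit j))"

definition clause_round :: "nat \<Rightarrow> nat" where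
  "clause_round j = occ j (true_lit j)"

lemma satisfied_clause:
  assumes "j \<in> satisfied"
  shows "j \<in> {1..m}" "lit j (true_lit j) = (clause_var j, a (clause_var j))"
    "clause_var j \<in> {1..n}" "clause_round j \<in> {1, 2, 3}"
    "(j, true_lit j) \<in> occurrences m lit (clause_var j)" "true_lit j \<in> {1, 2}"
proof -
  have j: "j \<in> {1..m}" and ex: "\<exists>q. q \<in> {1, 2} \<and> a (fst (lit j q)) = snd (lit j q)"
    using assms unfolding satisfied_def clause_sat_def by auto
  from ex have q: "true_lit j \<in> {1, 2} \<and> a (fst (lit j (true_lit j))) = snd (lit j (true_lit j))"
    unfolding true_lit_def by (rule someI_ex)
  show "j \<in> {1..m}" by (fact j)
  show "true_lit j \<in> {1, 2}" using q by simp
  show "lit j (true_lit j) = (clause_var j, a (clause_var j))"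
    using q unfolding clause_var_def by (simp add: prod_eq_iff)
  show x: "clause_var j \<in> {1..n}"
    unfolding clause_var_def using instance_lit_var[OF sat_instance j] q by blast
  show occ: "(j, true_lit j) \<in> occurrences m lit (clause_var j)"
    using j q unfolding occurrences_def clause_var_def by simp
  have "bij_betw (\<lambda>(j, q). occ j q) (occurrences m lit (clause_var j))
      {1..card (occurrences m lit (clause_var j))}"
    and "card (occurrences m lit (clause_var j)) \<le> 3"
    using sat_instance x unfolding max23sat_instance_def by blast+
  moreover have "occ j (true_lit j) \<in> (\<lambda>(j, q). occ j q) ` occurrences m lit (clause_var j)"
    using occ by force
  ultimately show "clause_round j \<in> {1, 2, 3}"
    unfolding clause_round_def bij_betw_def by auto
qed

lemma satisfied_clause_unique:
  assumes "j \<in> satisfied" "j' \<in> satisfied"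
    and "clause_var j = clause_var j'" "clause_round j = clause_round j'"
  shows "j = j'"
proof -
  have inj: "inj_on (\<lambda>(j, q). occ j q) (occurrences m lit (clause_var j))"
    using sat_instance satisfied_clause(3)[OF assms(1)]
    unfolding max23sat_instance_def bij_betw_def by blast
  have "(j, true_lit j) \<in> occurrences m lit (clause_var j)"
    "(j', true_lit j') \<in> occurrences m lit (clause_var j)"
    using satisfied_clause(5)[OF assms(1)] satisfied_clause(5)[OF assms(2)] assms(3) by simp_all
  then have "(j, true_lit j) = (j', true_lit j')"
    using inj_onD[OF inj, of "(j, true_lit j)" "(j', true_lit j')"] assms(4)
    unfolding clause_round_def by simp
  then show ?thesis by simp
qed

lemma gadget_matches_valuable:
  "i \<in> {1..n} \<Longrightarrow> valuable_match n m lit occ {PVar i, lit_player (i, \<not> a i)} 1"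
  "j \<in> satisfied \<Longrightarrow> valuable_match n m lit occ {lit_player (lit j (true_lit j)), PC j} (clause_round j)"
  unfolding valuable_match_def clause_round_def using satisfied_clause(1,6)[of j]
  by (auto simp: insert_commute)

text \<open>Gadget i occupies the seeds 16 (i - 1) + 1, ..., 16 (i - 1) + 16. Slot 1 holds the true
  literal of x_i, slots 9 and 10 the variable x_i and its false literal. The satisfied clause whose
  chosen literal is the r-th occurrence of x_i sits in slot 2^(r-1) + 1, where it meets the true
  literal in round r; dummies in slots 4, 6, 7, 8 keep it the strongest player of its half. The
  remaining seeds are filled arbitrarily.\<close>

definition dummy_slot :: "nat \<Rightarrow> nat" where
  "dummy_slot u = (if u = 0 then 4 else u + 5)"

definition clause_slot :: "nat \<Rightarrow> nat" where
  "clause_slot j = 2 ^ (clause_round j - 1) + 1"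

definition gadget_slot :: "player \<Rightarrow> nat \<times> nat" where
  "gadget_slot p = (case p of
      PVar i \<Rightarrow> (i, 9)
    | PT i \<Rightarrow> (i, if a i then 1 else 10)
    | PF i \<Rightarrow> (i, if a i then 10 else 1)
    | PC j \<Rightarrow> (clause_var j, clause_slot j)
    | PD d \<Rightarrow> ((d - 1) div 4 + 1, dummy_slot ((d - 1) mod 4)))"

definition position :: "player \<Rightarrow> nat" where
  "position p = 16 * (fst (gadget_slot p) - 1) + snd (gadget_slot p)"

definition placed :: "player set" where
  "placed = PVar ` {1..n} \<union> PT ` {1..n} \<union> PF ` {1..n} \<union> PC ` satisfied \<union> PD ` {1..4 * n}"

lemma gadget_slot_range:
  assumes "p \<in> placed"
  shows "fst (gadget_slot p) \<in> {1..n} \<and> snd (gadget_slot p) \<in> {1..10}"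
proof -
  from assms consider (variable) i where "i \<in> {1..n}" "p \<in> {PVar i, PT i, PF i}"
    | (clause) j where "j \<in> satisfied" "p = PC j"
    | (dummy) d where "d \<in> {1..4 * n}" "p = PD d"
    unfolding placed_def by blast
  then show ?thesis
  proof cases
    case variable
    then show ?thesis unfolding gadget_slot_def by auto
  next
    case clause
    then show ?thesis
      using satisfied_clause(3,4)[OF clause(1)] unfolding gadget_slot_def clause_slot_def by auto
  next
    case dummy
    then have "(d - 1) div 4 < n" by (auto intro!: less_mult_imp_div_less)
    moreover have "dummy_slot ((d - 1) mod 4) \<in> {1..10}" unfolding dummy_slot_def by auto
    ultimately show ?thesis using dummy(2) unfolding gadget_slot_def by auto
  qed
qed

lemma clause_slot_cases: "j \<in> satisfied \<Longrightarrow> clause_slot j \<in> {2, 3, 5}"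
  using satisfied_clause(4)[of j] unfolding clause_slot_def by auto

lemma clause_slot_unique:
  assumes "j \<in> satisfied" "j' \<in> satisfied" "clause_var j = clause_var j'" "clause_slot j = clause_slot j'"
  shows "j = j'"
proof (rule satisfied_clause_unique[OF assms(1-3)])
  show "clause_round j = clause_round j'"
    using assms(4) satisfied_clause(4)[OF assms(1)] satisfied_clause(4)[OF assms(2)]
    unfolding clause_slot_def by auto
qed

lemma dummy_slot_cases: "dummy_slot u \<in> {4, 6, 7, 8}" if "u < 4"
  using that unfolding dummy_slot_def by auto

lemma dummy_gadget_slot_unique:
  assumes "d \<in> {1..4 * n}" "d' \<in> {1..4 * n}" "gadget_slot (PD d) = gadget_slot (PD d')"
  shows "d = d'"
proof -
  have "(d - 1) div 4 = (d' - 1) div 4" "dummy_slot ((d - 1) mod 4) = dummy_slot ((d' - 1) mod 4)"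
    using assms(3) unfolding gadget_slot_def by simp_all
  moreover have "(d - 1) mod 4 = (d' - 1) mod 4"
    using calculation(2) unfolding dummy_slot_def by (auto split: if_splits)
  ultimately have "d - 1 = d' - 1" by (metis div_mult_mod_eq)
  then show ?thesis using assms(1,2) by simp arith
qed

lemma gadget_slot_inj: "inj_on gadget_slot placed"
proof (rule inj_onI)
  fix p p' assume p: "p \<in> placed" "p' \<in> placed" and eq: "gadget_slot p = gadget_slot p'"
  have slots: "snd (gadget_slot q) \<in> (case q of PVar i \<Rightarrow> {9} | PT i \<Rightarrow> {1, 10} | PF i \<Rightarrow> {1, 10}
      | PC j \<Rightarrow> {2, 3, 5} | PD d \<Rightarrow> {4, 6, 7, 8})" if "q \<in> placed" for q
    using that clause_slot_cases dummy_slot_cases unfolding placed_def gadget_slot_def by auto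
  have same_kind: "(case p of PVar i \<Rightarrow> 0 | PT i \<Rightarrow> 1 | PF i \<Rightarrow> 1 | PC j \<Rightarrow> 2 | PD d \<Rightarrow> 3) =
      (case p' of PVar i \<Rightarrow> 0 | PT i \<Rightarrow> 1 | PF i \<Rightarrow> 1 | PC j \<Rightarrow> (2::nat) | PD d \<Rightarrow> 3)"
    using slots[OF p(1)] slots[OF p(2)] eq by (cases p; cases p') auto
  show "p = p'"
  proof (cases p)
    case (PC j)
    then obtain j' where "p' = PC j'" using same_kind by (cases p') auto
    then show ?thesis
      using p eq PC clause_slot_unique unfolding placed_def gadget_slot_def by auto
  next
    case (PD d)
    then obtain d' where "p' = PD d'" using same_kind by (cases p') auto
    then show ?thesis
      using p eq PD dummy_gadget_slot_unique unfolding placed_def by auto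
  qed (use same_kind eq in \<open>cases p'; auto simp: gadget_slot_def split: if_splits\<close>)+
qed

lemma position_range: "p \<in> placed \<Longrightarrow> position p \<in> {1..16 * n}"
  using gadget_slot_range[of p] unfolding position_def by (auto simp: algebra_simps)

lemma position_inj: "inj_on position placed"
proof (rule inj_onI)
  fix p p' assume p: "p \<in> placed" "p' \<in> placed" and "position p = position p'"
  then have "fst (gadget_slot p) - 1 = fst (gadget_slot p') - 1 \<and> snd (gadget_slot p) = snd (gadget_slot p')"
    using gadget_slot_range[OF p(1)] gadget_slot_range[OF p(2)] mult_16_add_eq_iff
    unfolding position_def by simp
  then have "gadget_slot p = gadget_slot p'"
    using gadget_slot_range[OF p(1)] gadget_slot_range[OF p(2)] by (simp add: prod_eq_iff) arith
  then show "p = p'" using gadget_slot_inj p by (simp add: inj_on_def)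
qed

lemma placed_subset_players: "placed \<subseteq> T_players n m"
proof -
  have "4 * n \<le> 13 * n + T_pad n - m" using instance_clauses_le[OF sat_instance] by simp
  then show ?thesis
    using satisfied_clause(1) unfolding placed_def T_players_def by auto
qed

end

locale gadget_seating = assignment_gadgets +
  fixes N :: nat and seat :: "nat \<Rightarrow> player"
  assumes fits: "16 * n \<le> 2 ^ N" and seat_bij: "bij_betw seat {1..2 ^ N} (T_players n m)"
    and seat_position: "\<And>p. p \<in> placed \<Longrightarrow> seat (position p) = p"
begin

lemma seat_placed:
  assumes "s \<in> {1..2 ^ N}" "seat s \<in> placed"
  shows "position (seat s) = s"
proof -
  have "position (seat s) \<in> {1..2 ^ N}" using position_range[OF assms(2)] fits by auto
  then show ?thesis
    using seat_position[OF assms(2)] assms(1) seat_bij by (auto simp: bij_betw_def dest: inj_onD)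
qed

lemma seat_gadget_slot:
  assumes "i \<in> {1..n}" "t \<in> {1..10}" "seat (16 * (i - 1) + t) \<in> placed"
  shows "gadget_slot (seat (16 * (i - 1) + t)) = (i, t)"
proof -
  let ?p = "seat (16 * (i - 1) + t)"
  have "16 * (i - 1) + t \<in> {1..2 ^ N}" using assms(1,2) fits by auto
  then have "16 * (fst (gadget_slot ?p) - 1) + snd (gadget_slot ?p) = 16 * (i - 1) + t"
    using seat_placed assms(3) unfolding position_def by simp
  then show ?thesis
    using gadget_slot_range[OF assms(3)] assms(1,2) mult_16_add_eq_iff
    by (simp add: prod_eq_iff) arith
qed

lemma seat_rank_middle_slots:
  assumes "i \<in> {1..n}" "t \<in> {2..8}"
  shows "3 * n \<le> T_rank n m (seat (16 * (i - 1) + t))"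
proof -
  let ?p = "seat (16 * (i - 1) + t)"
  have "16 * (i - 1) + t \<in> {1..2 ^ N}" using assms fits by auto
  then have "?p \<in> T_players n m" using seat_bij by (auto simp: bij_betw_def)
  moreover have False if "?p \<in> placed" "?p \<in> PVar ` {1..n} \<union> PT ` {1..n} \<union> PF ` {1..n}"
    using seat_gadget_slot[OF assms(1) _ that(1)] that(2) assms(2) unfolding gadget_slot_def
    by (auto split: if_splits)
  ultimately show ?thesis unfolding T_players_def placed_def by auto
qed

lemma seat_rank_dummy_slots:
  assumes "i \<in> {1..n}" "t \<in> {4, 6, 7, 8}"
  shows "3 * n + m \<le> T_rank n m (seat (16 * (i - 1) + t))"
proof -
  define u where "u = (if t = 4 then 0 else t - 5)"
  define d where "d = 4 * (i - 1) + u + 1"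
  have "u < 4" "dummy_slot u = t" using assms(2) unfolding u_def dummy_slot_def by auto
  then have "gadget_slot (PD d) = (i, t)"
    using assms(1) unfolding gadget_slot_def d_def by auto
  moreover have "PD d \<in> placed" using \<open>u < 4\<close> assms(1) unfolding placed_def d_def by auto
  ultimately have "seat (16 * (i - 1) + t) = PD d"
    using seat_position unfolding position_def by force
  then show ?thesis unfolding d_def by simp
qed

lemma literal_block_winner:
  assumes "i \<in> {1..n}" "r \<le> 2" "1 \<le> k" "block r k = {16 * (i - 1) + 1 .. 16 * (i - 1) + 2 ^ r}"
  shows "block_winner (T_rank n m) seat r k = lit_player (i, a i)"
proof -
  have "gadget_slot (lit_player (i, a i)) = (i, 1)" "lit_player (i, a i) \<in> placed"
    using assms(1) unfolding gadget_slot_def placed_def lit_player_def by auto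
  then have s: "seat (16 * (i - 1) + 1) = lit_player (i, a i)"
    using seat_position unfolding position_def by force
  have "(2::nat) ^ r \<le> 4" using power_increasing[OF assms(2), of "2::nat"] by simp
  show ?thesis
  proof (subst s[symmetric], rule block_winner_eqI[OF assms(3)])
    show "16 * (i - 1) + 1 \<in> block r k" using assms(4) by simp
    fix s' assume "s' \<in> block r k" "s' \<noteq> 16 * (i - 1) + 1"
    then obtain t where "t \<in> {2..4}" "s' = 16 * (i - 1) + t"
      using assms(4) \<open>2 ^ r \<le> 4\<close> by (intro that[of "s' - 16 * (i - 1)"]) auto
    moreover have "T_rank n m (lit_player (i, a i)) < 3 * n"
      using assms(1) unfolding lit_player_def by auto
    ultimately show "T_rank n m (seat (16 * (i - 1) + 1)) < T_rank n m (seat s')"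
      using seat_rank_middle_slots[OF assms(1), of t] s by simp
  qed
qed

lemma clause_block_winner:
  assumes "j \<in> satisfied" "r = clause_round j - 1" "1 \<le> k"
    "block r k = {16 * (clause_var j - 1) + 2 ^ r + 1 .. 16 * (clause_var j - 1) + 2 ^ (r + 1)}"
  shows "block_winner (T_rank n m) seat r k = PC j"
proof -
  let ?c = "16 * (clause_var j - 1)"
  have r: "r \<in> {0, 1, 2}" using satisfied_clause(4)[OF assms(1)] assms(2) by auto
  have "gadget_slot (PC j) = (clause_var j, 2 ^ r + 1)" "PC j \<in> placed"
    using assms(1,2) unfolding gadget_slot_def clause_slot_def placed_def by auto
  then have s: "seat (?c + 2 ^ r + 1) = PC j"
    using seat_position unfolding position_def by force
  show ?thesis
  proof (subst s[symmetric], rule block_winner_eqI[OF assms(3)])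
    show "?c + 2 ^ r + 1 \<in> block r k" using assms(4) by simp
    fix s' assume "s' \<in> block r k" "s' \<noteq> ?c + 2 ^ r + 1"
    then have "s' - ?c \<in> {2 ^ r + 2 .. 2 ^ (r + 1)}" "s' = ?c + (s' - ?c)"
      using assms(4) by auto
    moreover have "{2 ^ r + 2 .. 2 ^ (r + 1)} \<subseteq> {4, 6, 7, 8::nat}" using r by auto
    ultimately obtain t where "t \<in> {4, 6, 7, 8}" "s' = ?c + t" by blast
    moreover have "T_rank n m (PC j) < 3 * n + m"
      using satisfied_clause(1)[OF assms(1)] by (simp; arith)
    ultimately show "T_rank n m (seat (?c + 2 ^ r + 1)) < T_rank n m (seat s')"
      using seat_rank_dummy_slots[OF satisfied_clause(3)[OF assms(1)], of t] s by simp
  qed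
qed

lemma variable_game:
  assumes "i \<in> {1..n}"
  shows "(1, 8 * (i - 1) + 5) \<in> games N"
    and "game_players (T_rank n m) seat (1, 8 * (i - 1) + 5) = {PVar i, lit_player (i, \<not> a i)}"
proof -
  show "(1, 8 * (i - 1) + 5) \<in> games N"
    using assms fits by (intro mem_gamesI) auto
  have "gadget_slot (PVar i) = (i, 9)" "gadget_slot (lit_player (i, \<not> a i)) = (i, 10)"
    "PVar i \<in> placed" "lit_player (i, \<not> a i) \<in> placed"
    using assms unfolding gadget_slot_def placed_def lit_player_def by auto
  then have "seat (16 * (i - 1) + 9) = PVar i" "seat (16 * (i - 1) + 10) = lit_player (i, \<not> a i)"
    using seat_position unfolding position_def by force+
  then show "game_players (T_rank n m) seat (1, 8 * (i - 1) + 5) = {PVar i, lit_player (i, \<not> a i)}"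
    unfolding game_players_def by (simp add: algebra_simps)
qed

lemma clause_game:
  assumes "j \<in> satisfied"
  defines "r \<equiv> clause_round j" and "k \<equiv> 2 ^ (4 - clause_round j) * (clause_var j - 1) + 1"
  shows "(r, k) \<in> games N"
    and "game_players (T_rank n m) seat (r, k) = {lit_player (lit j (true_lit j)), PC j}"
proof -
  let ?c = "16 * (clause_var j - 1)"
  have r: "r \<in> {1, 2, 3}" using satisfied_clause(4)[OF assms(1)] unfolding r_def .
  then have "(2::nat) ^ (4 - r) * 2 ^ r = 16" by auto
  then have c: "(k - 1) * 2 ^ r = ?c" unfolding k_def r_def by (simp add: algebra_simps)
  have "?c + 2 ^ r \<le> 16 * n"
    using r satisfied_clause(3)[OF assms(1)] by (auto simp: algebra_simps)
  then show "(r, k) \<in> games N"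
    using c r fits by (intro mem_gamesI) (auto simp: k_def algebra_simps)
  have "1 \<le> r" "1 \<le> k" using r unfolding k_def by auto
  note halves = block_halves[OF this, unfolded c]
  have "block_winner (T_rank n m) seat (r - 1) (2 * k - 1) = lit_player (clause_var j, a (clause_var j))"
    using r halves(1) \<open>1 \<le> k\<close> satisfied_clause(3)[OF assms(1)]
    by (intro literal_block_winner) auto
  moreover have "block_winner (T_rank n m) seat (r - 1) (2 * k) = PC j"
  proof (rule clause_block_winner[OF assms(1)])
    show "r - 1 = clause_round j - 1" "1 \<le> 2 * k" unfolding r_def k_def by simp_all
    have "k * 2 ^ r = ?c + 2 ^ (r - 1 + 1)" using c r \<open>1 \<le> k\<close> by (auto simp: algebra_simps)
    then show "block (r - 1) (2 * k) = {?c + 2 ^ (r - 1) + 1 .. ?c + 2 ^ (r - 1 + 1)}"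
      using halves(2) by simp
  qed
  ultimately show "game_players (T_rank n m) seat (r, k) = {lit_player (lit j (true_lit j)), PC j}"
    unfolding game_players_def using satisfied_clause(2)[OF assms(1)] by simp
qed

lemma tournament_value_ge: "n + card satisfied \<le> tournament_value (T_rank n m) (T_value n m lit occ) seat N"
proof -
  define g where "g u = (case u of Inl i \<Rightarrow> (1, 8 * (i - 1) + 5)
      | Inr j \<Rightarrow> (clause_round j, 2 ^ (4 - clause_round j) * (clause_var j - 1) + 1))" for u
  define M where "M u = (case u of Inl i \<Rightarrow> {PVar i, lit_player (i, \<not> a i)}
      | Inr j \<Rightarrow> {lit_player (lit j (true_lit j)), PC j})" for u
  have g: "g u \<in> games N" "game_players (T_rank n m) seat (g u) = M u"
    if "u \<in> {1..n} <+> satisfied" for u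
    using that variable_game clause_game unfolding g_def M_def by auto
  have valuable: "valuable_match n m lit occ (M u) (fst (g u))" if "u \<in> {1..n} <+> satisfied" for u
    using that gadget_matches_valuable unfolding g_def M_def by auto
  have "g ` ({1..n} <+> satisfied) \<subseteq>
      {g \<in> games N. valuable_match n m lit occ (game_players (T_rank n m) seat g) (fst g)}"
    using g valuable by (intro image_subsetI) simp
  moreover have "inj_on g ({1..n} <+> satisfied)"
  proof (rule inj_onI)
    fix u v assume uv: "u \<in> {1..n} <+> satisfied" "v \<in> {1..n} <+> satisfied" "g u = g v"
    then have "M u = M v" using g(2) by metis
    then show "u = v" using uv(1,2) by (auto simp: M_def doubleton_eq_iff)
  qed
  ultimately have "card ({1..n} <+> satisfied) \<le>
      card {g \<in> games N. valuable_match n m lit occ (game_players (T_rank n m) seat g) (fst g)}"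
    by (intro card_inj_on_le) (auto simp: games_def)
  also have "\<dots> = tournament_value (T_rank n m) (T_value n m lit occ) seat N"
    by (rule tournament_value_of_bool[symmetric]) (rule T_value_eq)
  finally show ?thesis by (simp add: card_Plus satisfied_def)
qed

end

context assignment_gadgets
begin

lemma seeding_for_assignment:
  "\<exists>\<sigma>. bij_betw \<sigma> (T_players n m) {1..2 ^ T_rounds n} \<and>
     n + card satisfied \<le> seeding_value (T_players n m) (T_rank n m) (T_value n m lit occ) (T_rounds n) \<sigma>"
proof -
  obtain \<sigma> where \<sigma>: "bij_betw \<sigma> (T_players n m) {1..2 ^ T_rounds n}" "\<And>p. p \<in> placed \<Longrightarrow> \<sigma> p = position p"
  proof (rule bij_betw_extend[OF position_inj placed_subset_players])
    show "position ` placed \<subseteq> {1..2 ^ T_rounds n}"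
      using position_range T_rounds_fit[of n] by fastforce
    show "card (T_players n m) = card {1..(2::nat) ^ T_rounds n}"
      using card_T_players[OF instance_clauses_le[OF sat_instance]] by (simp del: One_nat_def)
  qed (simp_all add: T_players_def)
  define seat where "seat = the_inv_into (T_players n m) \<sigma>"
  have "bij_betw seat {1..2 ^ T_rounds n} (T_players n m)"
    unfolding seat_def by (rule bij_betw_the_inv_into[OF \<sigma>(1)])
  moreover have "seat (position p) = p" if "p \<in> placed" for p
    using the_inv_into_f_f[OF bij_betw_imp_inj_on[OF \<sigma>(1)]] \<sigma>(2) that placed_subset_players
    unfolding seat_def by force
  ultimately interpret gadget_seating n m lit occ a "T_rounds n" seat
    using sat_instance T_rounds_fit by unfold_locales auto
  have "n + card satisfied \<le> tournament_value (T_rank n m) (T_value n m lit occ) seat (T_rounds n)"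
    by (rule tournament_value_ge)
  then show ?thesis using \<sigma>(1) unfolding seeding_value_def seat_def by blast
qed

end

lemma Max_eqI_bounded:
  fixes S :: "nat set"
  assumes "\<And>y. y \<in> S \<Longrightarrow> y \<le> b" "x \<in> S" "b \<le> x"
  shows "Max S = b"
proof (rule Max_eqI)
  show "finite S" using assms(1) finite_nat_set_iff_bounded_le by blast
  show "b \<in> S" using assms le_antisym by metis
qed (fact assms(1))

theorem corollary1:
  assumes "max23sat_instance n m lit occ"
  shows "opt_B (T_players n m) (T_rank n m) (T_value n m lit occ) (T_rounds n)
           = opt_A m lit + n"
proof -
  let ?value = "seeding_value (T_players n m) (T_rank n m) (T_value n m lit occ) (T_rounds n)"
  have upper: "?value \<sigma> \<le> opt_A m lit + n" if "bij_betw \<sigma> (T_players n m) {1..2 ^ T_rounds n}" for \<sigma>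
  proof -
    interpret instance_seating n m lit occ "T_rounds n" "the_inv_into (T_players n m) \<sigma>"
      using assms bij_betw_imp_inj_on[OF bij_betw_the_inv_into[OF that]] by unfold_locales
    show ?thesis unfolding seeding_value_def by (rule upper_bound)
  qed
  obtain a where opt: "opt_A m lit = card {j \<in> {1..m}. clause_sat lit a j}"
    using opt_A_attained by blast
  interpret assignment_gadgets n m lit occ a using assms by unfold_locales
  obtain \<sigma> where "bij_betw \<sigma> (T_players n m) {1..2 ^ T_rounds n}" "opt_A m lit + n \<le> ?value \<sigma>"
    using seeding_for_assignment opt unfolding satisfied_def by auto
  then show ?thesis
    unfolding opt_B_def using upper by (intro Max_eqI_bounded[of _ _ "?value \<sigma>"]) auto
qed

end
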